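(* Fix $\sigma^2>0$. Let $\mathcal S_C\subset\mathbb R$ be a finite constellation that is symmetric ($s\in\mathcal S_C\Rightarrow -s\in\mathcal S_C$), with points used with equal probability and unit average power. For $\delta>0$ let $\phi^{-1}_\delta(\rho)=1$ for $0\le\rho<\frac{\delta}{1+\sigma^2}$ and $\phi^{-1}_\delta(\rho)=\frac{\delta}{\rho}-\sigma^2$ for $\rho\ge\frac{\delta}{1+\sigma^2}$. Let $\psi^{opt}_{\mathcal S_C}(\rho)=\min\{\phi^{-1}_\delta(\rho),\mathrm{mmse}(\mathcal S_C,\rho)\}$ and $$a_{\mathcal S_C}(\delta)=\int_0^\infty\big(\phi^{-1}_\delta(\rho)-\psi^{opt}_{\mathcal S_C}(\rho)\big)\mathrm d\rho,\qquad R_{\mathrm{AC}}(\delta)=C_{\mathrm G}-\frac{a_{\mathcal S_C}(\delta)}{2\delta},$$ where $C_{\mathrm G}=\frac12\ln(1+1/\sigma^2)$. Then $R_{\mathrm{AC}}(\delta)\to C_{\mathrm G}$ as $\delta\to0$.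
   Context: $\mathrm{mmse}(\mathcal S,\rho)$ denotes the minimum mean-squared error of estimating $s$, drawn uniformly from $\mathcal S$, from the observation $\sqrt\rho\,s+w$ with $w\sim\mathcal N(0,1)$ independent of $s$. In the paper's interpretation $\delta\to0$ is taken jointly with the underlying code rate $R_{\mathrm C}=\delta R_{\mathrm{AC}}\to0$, and the decoder transfer curve is assumed to satisfy the matching condition $\psi=\psi^{opt}_{\mathcal S_C}$. *)

theory Defs
  imports "HOL-Probability.Probability"
begin

text \<open>Conditional-mean (MMSE) estimator of s, uniform on the finite set S,
  from y = sqrt rho * s + w with w ~ N(0,1).\<close>
definition cond_mean :: "real set \<Rightarrow> real \<Rightarrow> real \<Rightarrow> real" where
  "cond_mean S \<rho> y =
     (\<Sum>s\<in>S. s * std_normal_density (y - sqrt \<rho> * s)) /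
     (\<Sum>s\<in>S. std_normal_density (y - sqrt \<rho> * s))"

definition mmse :: "real set \<Rightarrow> real \<Rightarrow> real" where
  "mmse S \<rho> = (1 / real (card S)) *
     (\<Sum>s\<in>S. \<integral>w. (s - cond_mean S \<rho> (sqrt \<rho> * s + w))\<^sup>2 * std_normal_density w \<partial>lborel)"

definition phi_inv :: "real \<Rightarrow> real \<Rightarrow> real \<Rightarrow> real" where
  "phi_inv \<sigma>2 \<delta> \<rho> = (if \<rho> < \<delta> / (1 + \<sigma>2) then 1 else \<delta> / \<rho> - \<sigma>2)"

definition psi_opt :: "real set \<Rightarrow> real \<Rightarrow> real \<Rightarrow> real \<Rightarrow> real" where
  "psi_opt S \<sigma>2 \<delta> \<rho> = min (phi_inv \<sigma>2 \<delta> \<rho>) (mmse S \<rho>)"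

definition area_gap :: "real set \<Rightarrow> real \<Rightarrow> real \<Rightarrow> real" where
  "area_gap S \<sigma>2 \<delta> = (LINT \<rho>:{0..}|lborel. phi_inv \<sigma>2 \<delta> \<rho> - psi_opt S \<sigma>2 \<delta> \<rho>)"

definition C_G :: "real \<Rightarrow> real" where
  "C_G \<sigma>2 = ln (1 + 1 / \<sigma>2) / 2"

definition R_AC :: "real set \<Rightarrow> real \<Rightarrow> real \<Rightarrow> real" where
  "R_AC S \<sigma>2 \<delta> = C_G \<sigma>2 - area_gap S \<sigma>2 \<delta> / (2 * \<delta>)"

end

theory Submission imports Defs begin

text \<open>For small \<delta> the threshold \<delta>/\<sigma>2 beyond which phi_inv is nonpositive is close to 0, where
  mmse is close to its value 1 at \<rho> = 0; hence the integrand of the area gap is at most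
  \<epsilon> on [0, \<delta>/\<sigma>2] and 0 beyond, so the gap is O(\<epsilon> \<delta>) and R_AC(\<delta>) \<rightarrow> C_G.
  Continuity of mmse in \<rho> follows by dominated convergence, since the conditional mean
  is a convex combination of constellation points and therefore bounded.\<close>

lemma sum_eq_0_if_symmetric:
  fixes S :: "real set"
  assumes "finite S" "\<And>s. s \<in> S \<Longrightarrow> - s \<in> S"
  shows "(\<Sum>s\<in>S. s) = 0"
proof -
  have "(\<Sum>s\<in>S. s) = (\<Sum>s\<in>S. - s)"
    by (rule sum.reindex_bij_witness[of _ uminus uminus]) (simp_all add: assms)
  then show ?thesis by (simp add: sum_negf)
qed

lemma continuous_std_normal_density [continuous_intros]:
  "continuous F f \<Longrightarrow> continuous F (\<lambda>x. std_normal_density (f x))"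
  unfolding std_normal_density_def divide_inverse by (intro continuous_intros)

lemma abs_cond_mean_le:
  assumes "finite S" "S \<noteq> {}" "\<And>s. s \<in> S \<Longrightarrow> \<bar>s\<bar> \<le> M"
  shows "\<bar>cond_mean S \<rho> y\<bar> \<le> M"
proof -
  define a where "a s = std_normal_density (y - sqrt \<rho> * s)" for s
  have a_pos: "a s > 0" for s unfolding a_def by (rule normal_density_pos) simp
  have denom_pos: "(\<Sum>s\<in>S. a s) > 0" using assms(1,2) a_pos by (intro sum_pos) auto
  have "\<bar>\<Sum>s\<in>S. s * a s\<bar> \<le> (\<Sum>s\<in>S. \<bar>s\<bar> * a s)"
    using sum_abs[of "\<lambda>s. s * a s" S] a_pos by (simp add: abs_mult less_imp_le)
  also have "\<dots> \<le> (\<Sum>s\<in>S. M * a s)"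
    using assms(3) a_pos by (intro sum_mono mult_right_mono) (auto intro: less_imp_le)
  finally have "\<bar>\<Sum>s\<in>S. s * a s\<bar> \<le> M * (\<Sum>s\<in>S. a s)" by (simp add: sum_distrib_left)
  then show ?thesis
    using denom_pos by (simp add: cond_mean_def a_def[symmetric] abs_divide pos_divide_le_eq)
qed

lemma cond_mean_at_0: "cond_mean S 0 y = (\<Sum>s\<in>S. s) / real (card S)"
  using normal_density_pos[of 1 0 y]
  by (simp add: cond_mean_def sum_distrib_right[symmetric])

lemma isCont_cond_mean:
  assumes "finite S" "S \<noteq> {}"
  shows "isCont (\<lambda>\<rho>. cond_mean S \<rho> (sqrt \<rho> * s + w)) \<rho>\<^sub>0"
proof -
  have "(\<Sum>s'\<in>S. std_normal_density (sqrt \<rho>\<^sub>0 * s + w - sqrt \<rho>\<^sub>0 * s')) \<noteq> 0"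
    using assms by (intro less_imp_neq[symmetric] sum_pos normal_density_pos) auto
  then show ?thesis unfolding cond_mean_def by (intro continuous_intros)
qed

lemma isCont_mmse_term:
  assumes fin: "finite S" and ne: "S \<noteq> {}"
  shows "isCont (\<lambda>\<rho>. \<integral>w. (s - cond_mean S \<rho> (sqrt \<rho> * s + w))\<^sup>2 * std_normal_density w \<partial>lborel) \<rho>\<^sub>0"
proof (rule continuous_at_sequentiallyI)
  define M where "M = Max (abs ` S)"
  have bound: "\<bar>t\<bar> \<le> M" if "t \<in> S" for t
    unfolding M_def using fin that by (intro Max_ge) auto
  define g where "g \<rho> w = (s - cond_mean S \<rho> (sqrt \<rho> * s + w))\<^sup>2 * std_normal_density w" for \<rho> w
  fix X :: "nat \<Rightarrow> real" assume X: "X \<longlonglongrightarrow> \<rho>\<^sub>0"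
  have "(\<lambda>i. integral\<^sup>L lborel (g (X i))) \<longlonglongrightarrow> integral\<^sup>L lborel (g \<rho>\<^sub>0)"
  proof (rule integral_dominated_convergence[where w="\<lambda>w. (\<bar>s\<bar> + M)\<^sup>2 * std_normal_density w"])
    have "g \<rho> \<in> borel_measurable lborel" for \<rho>
      unfolding g_def cond_mean_def by measurable
    then show "g \<rho>\<^sub>0 \<in> borel_measurable lborel" "g (X i) \<in> borel_measurable lborel" for i
      by blast+
    show "integrable lborel (\<lambda>w. (\<bar>s\<bar> + M)\<^sup>2 * std_normal_density w)" by simp
    show "AE w in lborel. (\<lambda>i. g (X i) w) \<longlonglongrightarrow> g \<rho>\<^sub>0 w"
      unfolding g_def
      by (intro AE_I2 tendsto_intros isCont_tendsto_compose[OF isCont_cond_mean[OF fin ne] X])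
    show "AE w in lborel. norm (g (X i) w) \<le> (\<bar>s\<bar> + M)\<^sup>2 * std_normal_density w" for i
    proof (rule AE_I2)
      fix w
      let ?c = "cond_mean S (X i) (sqrt (X i) * s + w)"
      have "\<bar>s - ?c\<bar> \<le> \<bar>\<bar>s\<bar> + M\<bar>"
      proof -
        have "\<bar>?c\<bar> \<le> M" by (rule abs_cond_mean_le) (use fin ne bound in auto)
        then show ?thesis using abs_triangle_ineq4[of s ?c] abs_ge_self[of "\<bar>s\<bar> + M"] by linarith
      qed
      then have "(s - ?c)\<^sup>2 \<le> (\<bar>s\<bar> + M)\<^sup>2"
        by (simp only: abs_le_square_iff)
      then show "norm (g (X i) w) \<le> (\<bar>s\<bar> + M)\<^sup>2 * std_normal_density w"
        unfolding g_def by (simp add: mult_right_mono)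
    qed
  qed
  then show "(\<lambda>i. integral\<^sup>L lborel (g (X i))) \<longlonglongrightarrow> integral\<^sup>L lborel (g \<rho>\<^sub>0)" .
qed

lemma isCont_mmse:
  assumes "finite S" "S \<noteq> {}"
  shows "isCont (mmse S) \<rho>\<^sub>0"
proof -
  have "isCont (\<lambda>\<rho>. (1 / real (card S)) *
     (\<Sum>s\<in>S. \<integral>w. (s - cond_mean S \<rho> (sqrt \<rho> * s + w))\<^sup>2 * std_normal_density w \<partial>lborel)) \<rho>\<^sub>0"
    by (intro continuous_mult continuous_const continuous_sum isCont_mmse_term assms)
  then show ?thesis unfolding mmse_def .
qed

lemma mmse_at_0:
  assumes "(\<Sum>s\<in>S. s) = 0"
  shows "mmse S 0 = (\<Sum>s\<in>S. s\<^sup>2) / real (card S)"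
proof -
  have "cond_mean S 0 y = 0" for y by (simp add: cond_mean_at_0 assms)
  then show ?thesis by (simp add: mmse_def)
qed

lemma mmse_nonneg: "mmse S \<rho> \<ge> 0"
  unfolding mmse_def by (intro mult_nonneg_nonneg sum_nonneg integral_nonneg) auto

lemma phi_inv_le_1:
  assumes "\<sigma>2 \<ge> 0" "\<delta> > 0"
  shows "phi_inv \<sigma>2 \<delta> \<rho> \<le> 1"
proof (cases "\<rho> < \<delta> / (1 + \<sigma>2)")
  case False
  have "\<delta> / (1 + \<sigma>2) > 0" using assms by simp
  with False have "\<rho> > 0" by linarith
  from False assms have "\<delta> \<le> \<rho> * (1 + \<sigma>2)" by (simp add: not_less pos_divide_le_eq)
  with \<open>\<rho> > 0\<close> have "\<delta> / \<rho> \<le> 1 + \<sigma>2" by (simp add: divide_le_eq mult.commute)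
  with False show ?thesis unfolding phi_inv_def by simp
qed (simp add: phi_inv_def)

lemma phi_inv_nonpos:
  assumes "\<sigma>2 > 0" "\<delta> > 0" "\<rho> \<ge> \<delta> / \<sigma>2"
  shows "phi_inv \<sigma>2 \<delta> \<rho> \<le> 0"
proof -
  have "\<delta> / (1 + \<sigma>2) < \<delta> / \<sigma>2" using assms by (simp add: frac_less2)
  moreover have "\<rho> > 0" using assms divide_pos_pos[of \<delta> \<sigma>2] by linarith
  moreover have "\<delta> / \<rho> \<le> \<sigma>2"
    using assms \<open>\<rho> > 0\<close> by (simp add: pos_divide_le_eq mult.commute)
  ultimately show ?thesis using assms(3) unfolding phi_inv_def by simp
qed

lemma area_gap_integrand_le:
  assumes "\<sigma>2 > 0" "\<delta> > 0" "\<rho> \<ge> 0" "\<epsilon> \<ge> 0"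
    and "\<rho> < \<delta> / \<sigma>2 \<Longrightarrow> mmse S \<rho> \<ge> 1 - \<epsilon>"
  shows "phi_inv \<sigma>2 \<delta> \<rho> - psi_opt S \<sigma>2 \<delta> \<rho> \<le> \<epsilon> * indicator {0..\<delta>/\<sigma>2} \<rho>"
proof (cases "\<rho> < \<delta> / \<sigma>2")
  case True
  then show ?thesis
    using assms phi_inv_le_1[of \<sigma>2 \<delta> \<rho>] unfolding psi_opt_def by (simp add: indicator_def)
next
  case False
  then show ?thesis
    using assms phi_inv_nonpos[of \<sigma>2 \<delta> \<rho>] mmse_nonneg[of S \<rho>] unfolding psi_opt_def by simp
qed

lemma area_gap_bounds:
  assumes \<sigma>2: "\<sigma>2 > 0" and \<delta>: "\<delta> > 0" and \<epsilon>: "\<epsilon> \<ge> 0"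
    and mmse_ge: "\<And>\<rho>. 0 \<le> \<rho> \<Longrightarrow> \<rho> < \<delta> / \<sigma>2 \<Longrightarrow> mmse S \<rho> \<ge> 1 - \<epsilon>"
  shows "0 \<le> area_gap S \<sigma>2 \<delta>" and "area_gap S \<sigma>2 \<delta> \<le> \<epsilon> * (\<delta> / \<sigma>2)"
proof -
  define h where "h \<rho> = indicator {0..} \<rho> * (phi_inv \<sigma>2 \<delta> \<rho> - psi_opt S \<sigma>2 \<delta> \<rho>)" for \<rho> :: real
  have gap_eq: "area_gap S \<sigma>2 \<delta> = integral\<^sup>L lborel h"
    unfolding area_gap_def set_lebesgue_integral_def h_def by simp
  have h_le: "h \<rho> \<le> \<epsilon> * indicator {0..\<delta>/\<sigma>2} \<rho>" for \<rho>
    using area_gap_integrand_le[OF \<sigma>2 \<delta> _ \<epsilon> mmse_ge, of \<rho>] \<epsilon>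
    by (cases "\<rho> \<ge> 0") (auto simp: h_def indicator_def)
  show "0 \<le> area_gap S \<sigma>2 \<delta>"
    unfolding gap_eq h_def psi_opt_def by (intro integral_nonneg_AE) (simp add: indicator_def)
  have bound_integrable: "integrable lborel (\<lambda>\<rho>. \<epsilon> * indicator {0..\<delta>/\<sigma>2} \<rho> :: real)"
    using \<sigma>2 \<delta> by (intro integrable_mult_right integrable_real_indicator) auto
  have "integral\<^sup>L lborel h \<le> (LINT \<rho>|lborel. \<epsilon> * indicator {0..\<delta>/\<sigma>2} \<rho>)"
  proof (cases "integrable lborel h")
    case True
    then show ?thesis by (rule integral_mono[OF _ bound_integrable h_le])
  next
    case False
    then show ?thesis using \<sigma>2 \<delta> \<epsilon> by (simp add: not_integrable_integral_eq)
  qed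
  then show "area_gap S \<sigma>2 \<delta> \<le> \<epsilon> * (\<delta> / \<sigma>2)" using gap_eq \<sigma>2 \<delta> by simp
qed

lemma area_gap_over_delta_tendsto_0:
  assumes \<sigma>2: "\<sigma>2 > 0" and cont: "isCont (mmse S) 0" and mmse_0: "mmse S 0 = 1"
  shows "((\<lambda>\<delta>. area_gap S \<sigma>2 \<delta> / \<delta>) \<longlongrightarrow> 0) (at_right 0)"
  unfolding tendsto_iff
proof (intro allI impI)
  fix e :: real assume e: "e > 0"
  obtain d where d: "d > 0" and near_0: "\<And>\<rho>. \<bar>\<rho>\<bar> < d \<Longrightarrow> \<bar>mmse S \<rho> - 1\<bar> < e * \<sigma>2 / 2"
  proof -
    have "e * \<sigma>2 / 2 > 0" using e \<sigma>2 by simp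
    from cont[unfolded continuous_at_eps_delta, rule_format, OF this]
    obtain d where "d > 0" "\<forall>\<rho>. dist \<rho> 0 < d \<longrightarrow> dist (mmse S \<rho>) (mmse S 0) < e * \<sigma>2 / 2"
      by blast
    then show ?thesis using that by (simp add: dist_real_def mmse_0)
  qed
  have "dist (area_gap S \<sigma>2 \<delta> / \<delta>) 0 < e" if \<delta>: "0 < \<delta>" "\<delta> < d * \<sigma>2" for \<delta>
  proof -
    have "\<delta> / \<sigma>2 < d" using \<delta> \<sigma>2 by (simp add: divide_less_eq)
    have mmse_ge: "mmse S \<rho> \<ge> 1 - e * \<sigma>2 / 2" if "0 \<le> \<rho>" "\<rho> < \<delta> / \<sigma>2" for \<rho>
    proof -
      have "\<bar>mmse S \<rho> - 1\<bar> < e * \<sigma>2 / 2" using near_0 that \<open>\<delta> / \<sigma>2 < d\<close> by simp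
      then show ?thesis unfolding abs_less_iff by linarith
    qed
    have "e * \<sigma>2 / 2 \<ge> 0" using e \<sigma>2 by simp
    note gap = area_gap_bounds[OF \<sigma>2 \<delta>(1) this mmse_ge]
    have "area_gap S \<sigma>2 \<delta> \<le> e * \<delta> / 2" using gap(2) \<sigma>2 by simp
    with gap(1) \<delta> mult_pos_pos[OF e \<delta>(1)] show ?thesis by (simp add: pos_divide_less_eq)
  qed
  then show "eventually (\<lambda>\<delta>. dist (area_gap S \<sigma>2 \<delta> / \<delta>) 0 < e) (at_right 0)"
    unfolding eventually_at_right_field using d \<sigma>2 by (intro exI[of _ "d * \<sigma>2"]) auto
qed

theorem theorem2:
  fixes S :: "real set" and \<sigma>2 :: real
  assumes "\<sigma>2 > 0"
    and "finite S" and "S \<noteq> {}"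
    and "\<And>s. s \<in> S \<Longrightarrow> - s \<in> S"
    and "(\<Sum>s\<in>S. s\<^sup>2) / real (card S) = 1"
  shows "((\<lambda>\<delta>. R_AC S \<sigma>2 \<delta>) \<longlongrightarrow> C_G \<sigma>2) (at_right 0)"
proof -
  have "mmse S 0 = 1"
    using assms(5) by (simp add: mmse_at_0 sum_eq_0_if_symmetric[OF assms(2,4)])
  then have "((\<lambda>\<delta>. area_gap S \<sigma>2 \<delta> / \<delta>) \<longlongrightarrow> 0) (at_right 0)"
    by (rule area_gap_over_delta_tendsto_0[OF assms(1) isCont_mmse[OF assms(2,3)]])
  then have "((\<lambda>\<delta>. C_G \<sigma>2 - area_gap S \<sigma>2 \<delta> / \<delta> / 2) \<longlongrightarrow> C_G \<sigma>2 - 0) (at_right 0)"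
    by (intro tendsto_diff tendsto_const tendsto_divide_zero)
  moreover have "R_AC S \<sigma>2 \<delta> = C_G \<sigma>2 - area_gap S \<sigma>2 \<delta> / \<delta> / 2" for \<delta>
    unfolding R_AC_def by (simp add: divide_divide_eq_left mult.commute)
  ultimately show ?thesis by simp
qed

end
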